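(* Fix a metric space $M$ and a point $s\in M$, and consider algorithms with all servers starting at $s$. Suppose there is a constant $\rho$ such that for every $h\in\mathbb{N}$ there exists $k=k(h)$ for which the $(h,k)$-server problem on $M$ (all online and offline servers starting at $s$) admits a strictly $\rho$-competitive online algorithm. Then there exists a strictly $\rho$-competitive online algorithm for the infinite server problem on $(M,s)$.
   Context: Infinite server problem on $(M,s)$: $M$ is a metric space with metric $d$ and $s\in M$ is the source. An unbounded number of servers initially reside at $s$. A finite sequence of requests (points of $M$) is revealed one by one; each must be served immediately, without knowledge of future requests, by moving some server to the requested point. The cost is the total distance traveled by the servers. The $(h,k)$-server problem on $M$ ($k\ge h$) is defined similarly except that the online algorithm has $k$ servers and is compared against an optimal offline algorithm with $h$ servers. All online algorithms are deterministic. An online algorithm $ALG$ is strictly $\rho$-competitive if $ALG(\sigma)\le \rho\, OPT(\sigma)$ for every request sequence $\sigma$, where $OPT(\sigma)$ is the optimal offline cost (with $h$ servers in the $(h,k)$ case, with unboundedly many servers in the infinite server case). *)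

theory Defs
  imports Main "HOL-Analysis.Analysis"
begin

text \<open>A schedule c assigns to step i (0-based) the index c i of the server
that is moved to the i-th request.\<close>

fun run_cost :: "(nat \<Rightarrow> 'a::metric_space) \<Rightarrow> (nat \<Rightarrow> nat) \<Rightarrow> 'a list \<Rightarrow> real" where
  "run_cost conf c [] = 0"
| "run_cost conf c (r # rs) =
     dist (conf (c 0)) r + run_cost (conf(c 0 := r)) (\<lambda>i. c (Suc i)) rs"

definition sched_cost :: "'a::metric_space \<Rightarrow> (nat \<Rightarrow> nat) \<Rightarrow> 'a list \<Rightarrow> real" where
  "sched_cost s c \<sigma> = run_cost (\<lambda>_. s) c \<sigma>"

text \<open>A deterministic online algorithm is a map from the requests seen so far (the last
element being the current request) to the index of the server it moves.\<close>
definition online_cost :: "'a::metric_space \<Rightarrow> ('a list \<Rightarrow> nat) \<Rightarrow> 'a list \<Rightarrow> real" where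
  "online_cost s A \<sigma> = sched_cost s (\<lambda>i. A (take (Suc i) \<sigma>)) \<sigma>"

definition opt_h :: "'a::metric_space \<Rightarrow> nat \<Rightarrow> 'a list \<Rightarrow> real" where
  "opt_h s h \<sigma> = Inf {sched_cost s c \<sigma> | c. \<forall>i. c i < h}"

definition opt_inf :: "'a::metric_space \<Rightarrow> 'a list \<Rightarrow> real" where
  "opt_inf s \<sigma> = Inf {sched_cost s c \<sigma> | c. True}"

end

theory Submission imports Defs "HOL-Analysis.Analysis" begin

text \<open>Server identities are interchangeable: relabelling each server by the number of distinct
servers used before its first use changes no cost, and afterwards the server serving request i
has index at most i.  Hence on sequences of length at most h, h servers serve as well as
infinitely many, and every online algorithm may be assumed to choose index at most
length xs on input xs.  Such algorithms form a compact space (a product of finite discrete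
spaces), and failing competitiveness on a fixed sequence is an open condition.  If every
algorithm failed on some sequence, finitely many sequences would already defeat all
algorithms, contradicting the (h,k)-algorithm for h exceeding their lengths.\<close>

lemma run_cost_cong:
  "(\<forall>i<length rs. c i = c' i) \<Longrightarrow> run_cost conf c rs = run_cost conf c' rs"
proof (induction rs arbitrary: conf c c')
  case (Cons r rs)
  then have "c 0 = c' 0" and "\<forall>i<length rs. c (Suc i) = c' (Suc i)" by auto
  then show ?case using Cons.IH[of "\<lambda>i. c (Suc i)" "\<lambda>i. c' (Suc i)"] by simp
qed simp

lemma run_cost_relabel:
  assumes "range c \<subseteq> V" "inj_on f V" "\<forall>v\<in>V. conf' (f v) = conf v"
  shows "run_cost conf c rs = run_cost conf' (f \<circ> c) rs"
  using assms
proof (induction rs arbitrary: conf conf' c)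
  case (Cons r rs)
  have "\<forall>v\<in>V. (conf'(f (c 0) := r)) (f v) = (conf(c 0 := r)) v"
    using Cons.prems by (auto dest: inj_onD)
  then have "run_cost (conf(c 0 := r)) (\<lambda>i. c (Suc i)) rs
           = run_cost (conf'(f (c 0) := r)) (f \<circ> (\<lambda>i. c (Suc i))) rs"
    using Cons.prems by (intro Cons.IH) auto
  moreover have "conf' (f (c 0)) = conf (c 0)" using Cons.prems by auto
  ultimately show ?case by (simp add: o_def)
qed simp

definition first_use_label :: "(nat \<Rightarrow> nat) \<Rightarrow> nat \<Rightarrow> nat" where
  "first_use_label c v = card (c ` {..<(LEAST j. c j = v)})"

definition canonical_sched :: "(nat \<Rightarrow> nat) \<Rightarrow> nat \<Rightarrow> nat" where
  "canonical_sched c = first_use_label c \<circ> c"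

lemma Least_eq_le: "(LEAST j. c j = c i) \<le> (i::nat)"
  by (rule Least_le) simp

lemma canonical_sched_le: "canonical_sched c i \<le> i"
proof -
  have "canonical_sched c i \<le> card {..<(LEAST j. c j = c i)}"
    unfolding canonical_sched_def first_use_label_def using card_image_le by force
  also have "\<dots> \<le> i" using Least_eq_le[of c i] by simp
  finally show ?thesis .
qed

lemma canonical_sched_cong:
  assumes "\<forall>j\<le>i. c j = c' j"
  shows "canonical_sched c i = canonical_sched c' i"
proof -
  let ?m = "LEAST j. c j = c i"
  have "(LEAST j. c' j = c' i) = ?m"
  proof (rule Least_equality)
    show "c' ?m = c' i"
      using assms Least_eq_le[of c i] LeastI[of "\<lambda>j. c j = c i" i] by auto
    show "?m \<le> y" if "c' y = c' i" for y
      using assms that Least_eq_le[of c i] by (cases "y \<le> i") (auto intro: Least_le)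
  qed
  moreover have "c ` {..<?m} = c' ` {..<?m}"
    using assms Least_eq_le[of c i] by (intro image_cong) auto
  ultimately show ?thesis by (simp add: canonical_sched_def first_use_label_def)
qed

lemma first_use_label_inj_on: "inj_on (first_use_label c) (range c)"
proof -
  have less: "first_use_label c v < first_use_label c w"
    if "v \<in> range c" "w \<in> range c" "(LEAST j. c j = v) < (LEAST j. c j = w)" for v w
  proof -
    let ?a = "LEAST j. c j = v" and ?b = "LEAST j. c j = w"
    have "c ?a = v" using \<open>v \<in> range c\<close> by (auto intro: LeastI)
    then have "v \<in> c ` {..<?b}" using that(3) by (metis imageI lessThan_iff)
    then have "insert v (c ` {..<?a}) \<subseteq> c ` {..<?b}" using that(3) by auto
    moreover have "v \<notin> c ` {..<?a}" by (auto dest: not_less_Least)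
    ultimately show ?thesis
      unfolding first_use_label_def by (metis card_insert_disjoint card_mono finite_imageI
          finite_lessThan less_eq_Suc_le)
  qed
  show ?thesis
  proof (rule inj_onI, rule ccontr)
    fix v w assume vw: "v \<in> range c" "w \<in> range c" "first_use_label c v = first_use_label c w" "v \<noteq> w"
    have "c (LEAST j. c j = v) = v" "c (LEAST j. c j = w) = w" using vw(1,2) by (auto intro: LeastI)
    then have "(LEAST j. c j = v) \<noteq> (LEAST j. c j = w)" using vw(4) by metis
    then show False using less[of v w] less[of w v] vw(1-3) by linarith
  qed
qed

lemma sched_cost_canonical_sched: "sched_cost s (canonical_sched c) \<sigma> = sched_cost s c \<sigma>"
  unfolding sched_cost_def canonical_sched_def
  using run_cost_relabel[of c "range c" "first_use_label c" "\<lambda>_. s" "\<lambda>_. s" \<sigma>]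
    first_use_label_inj_on by simp

lemma opt_h_eq_opt_inf:
  assumes "h \<ge> 1" "length \<sigma> \<le> h"
  shows "opt_h s h \<sigma> = opt_inf s \<sigma>"
proof -
  have "sched_cost s c \<sigma> \<in> {sched_cost s c \<sigma> | c. \<forall>i. c i < h}" for c
  proof -
    define c' where "c' i = (if i < length \<sigma> then canonical_sched c i else 0)" for i
    have "\<forall>i. c' i < h"
      using assms canonical_sched_le[of c] by (simp add: c'_def) (meson le_less_trans less_le_trans)
    moreover have "sched_cost s c' \<sigma> = sched_cost s (canonical_sched c) \<sigma>"
      unfolding sched_cost_def by (rule run_cost_cong) (simp add: c'_def)
    ultimately show ?thesis
      by (intro CollectI exI[of _ c']) (simp add: sched_cost_canonical_sched)
  qed
  then have "{sched_cost s c \<sigma> | c. \<forall>i. c i < h} = {sched_cost s c \<sigma> | c. True}" by blast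
  then show ?thesis unfolding opt_h_def opt_inf_def by simp
qed

lemma online_cost_cong:
  "(\<forall>i<length \<sigma>. A (take (Suc i) \<sigma>) = B (take (Suc i) \<sigma>)) \<Longrightarrow> online_cost s A \<sigma> = online_cost s B \<sigma>"
  unfolding online_cost_def sched_cost_def by (rule run_cost_cong) simp

definition canonical_online :: "('a list \<Rightarrow> nat) \<Rightarrow> 'a list \<Rightarrow> nat" where
  "canonical_online A xs = canonical_sched (\<lambda>j. A (take (Suc j) xs)) (length xs - 1)"

lemma canonical_online_le: "canonical_online A xs \<le> length xs"
  unfolding canonical_online_def using canonical_sched_le[of _ "length xs - 1"] by (meson diff_le_self le_trans)

lemma online_cost_canonical_online: "online_cost s (canonical_online A) \<sigma> = online_cost s A \<sigma>"
proof -
  have "canonical_online A (take (Suc i) \<sigma>) = canonical_sched (\<lambda>j. A (take (Suc j) \<sigma>)) i"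
    if "i < length \<sigma>" for i
  proof -
    have "canonical_sched (\<lambda>j. A (take (Suc j) (take (Suc i) \<sigma>))) i
        = canonical_sched (\<lambda>j. A (take (Suc j) \<sigma>)) i"
      by (rule canonical_sched_cong) (simp add: min_def)
    then show ?thesis using that by (simp add: canonical_online_def)
  qed
  then have "sched_cost s (\<lambda>i. canonical_online A (take (Suc i) \<sigma>)) \<sigma>
           = sched_cost s (canonical_sched (\<lambda>j. A (take (Suc j) \<sigma>))) \<sigma>"
    unfolding sched_cost_def by (intro run_cost_cong) simp
  then show ?thesis unfolding online_cost_def sched_cost_canonical_sched .
qed

definition algorithm_space :: "('a list \<Rightarrow> nat) topology" where
  "algorithm_space = product_topology (\<lambda>xs. discrete_topology {..length xs}) UNIV"

lemma topspace_algorithm_space: "topspace algorithm_space = {A. \<forall>xs. A xs \<le> length xs}"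
  by (auto simp: algorithm_space_def PiE_def)

lemma compact_space_algorithm_space: "compact_space algorithm_space"
  by (simp add: algorithm_space_def compact_space_product_topology compact_space_discrete_topology)

lemma openin_algorithm_space_eval:
  assumes "A \<in> topspace algorithm_space"
  shows "openin algorithm_space {B \<in> topspace algorithm_space. B xs = A xs}"
proof -
  have "continuous_map algorithm_space (discrete_topology {..length xs}) (\<lambda>B. B xs)"
    unfolding algorithm_space_def by (rule continuous_map_product_projection) simp
  moreover have "openin (discrete_topology {..length xs}) {A xs}"
    using assms by (simp add: topspace_algorithm_space)
  ultimately have "openin algorithm_space {B \<in> topspace algorithm_space. B xs \<in> {A xs}}"
    by (rule openin_continuous_map_preimage)
  then show ?thesis by simp
qed

lemma openin_online_cost_gt:
  "openin algorithm_space {A \<in> topspace algorithm_space. b < online_cost s A \<sigma>}"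
proof (subst openin_subopen, intro ballI)
  fix A assume A: "A \<in> {A \<in> topspace algorithm_space. b < online_cost s A \<sigma>}"
  define C where "C = (\<Inter>i<length \<sigma>.
    {B \<in> topspace algorithm_space. B (take (Suc i) \<sigma>) = A (take (Suc i) \<sigma>)}) \<inter> topspace algorithm_space"
  have "openin algorithm_space C"
    unfolding C_def using A by (intro openin_INT openin_algorithm_space_eval) auto
  moreover have "C \<subseteq> {A \<in> topspace algorithm_space. b < online_cost s A \<sigma>}"
  proof
    fix B assume "B \<in> C"
    then have "B \<in> topspace algorithm_space" "online_cost s B \<sigma> = online_cost s A \<sigma>"
      by (simp_all add: C_def online_cost_cong)
    then show "B \<in> {A \<in> topspace algorithm_space. b < online_cost s A \<sigma>}" using A by simp
  qed
  moreover have "A \<in> C" using A by (simp add: C_def)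
  ultimately show "\<exists>C. openin algorithm_space C \<and> A \<in> C \<and>
      C \<subseteq> {A \<in> topspace algorithm_space. b < online_cost s A \<sigma>}" by blast
qed

lemma online_bound_compactness:
  fixes b :: "'a::metric_space list \<Rightarrow> real"
  assumes "\<And>S. finite S \<Longrightarrow> \<exists>A. (\<forall>xs. A xs \<le> length xs) \<and> (\<forall>\<sigma>\<in>S. online_cost s A \<sigma> \<le> b \<sigma>)"
  shows "\<exists>A. \<forall>\<sigma>. online_cost s A \<sigma> \<le> b \<sigma>"
proof (rule ccontr)
  assume fails: "\<nexists>A. \<forall>\<sigma>. online_cost s A \<sigma> \<le> b \<sigma>"
  define U where "U \<sigma> = {A \<in> topspace algorithm_space. b \<sigma> < online_cost s A \<sigma>}" for \<sigma>
  have "\<forall>C\<in>range U. openin algorithm_space C"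
    by (auto simp: U_def openin_online_cost_gt)
  moreover have "topspace algorithm_space \<subseteq> \<Union>(range U)"
    using fails by (auto simp: U_def not_le)
  ultimately obtain F where "finite F" "F \<subseteq> range U" "topspace algorithm_space \<subseteq> \<Union>F"
    using compact_space_algorithm_space[unfolded compact_space_alt, rule_format, of "range U"]
    by blast
  moreover obtain S where "finite S" "F = U ` S"
    using finite_subset_image[OF \<open>finite F\<close> \<open>F \<subseteq> range U\<close>] by blast
  moreover obtain A where "\<forall>xs. A xs \<le> length xs" and A: "\<forall>\<sigma>\<in>S. online_cost s A \<sigma> \<le> b \<sigma>"
    using assms \<open>finite S\<close> by blast
  then have "A \<in> topspace algorithm_space" by (simp add: topspace_algorithm_space)
  ultimately obtain \<sigma> where "\<sigma> \<in> S" "b \<sigma> < online_cost s A \<sigma>" unfolding U_def by blast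
  then show False using A by (meson not_le)
qed

theorem theorem2:
  fixes s :: "'a::metric_space" and \<rho> :: real
  assumes "\<forall>h::nat. h \<ge> 1 \<longrightarrow> (\<exists>k::nat. k \<ge> h \<and>
             (\<exists>A :: 'a list \<Rightarrow> nat. (\<forall>xs. A xs < k) \<and>
                (\<forall>\<sigma>. online_cost s A \<sigma> \<le> \<rho> * opt_h s h \<sigma>)))"
  shows "\<exists>A :: 'a list \<Rightarrow> nat. \<forall>\<sigma>. online_cost s A \<sigma> \<le> \<rho> * opt_inf s \<sigma>"
proof (rule online_bound_compactness)
  fix S :: "'a list set" assume "finite S"
  define h where "h = Suc (\<Sum>\<sigma>\<in>S. length \<sigma>)"
  have opt: "opt_h s h \<sigma> = opt_inf s \<sigma>" if "\<sigma> \<in> S" for \<sigma>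
    using member_le_sum[OF that, of length] \<open>finite S\<close>
    by (intro opt_h_eq_opt_inf) (simp_all add: h_def)
  have "h \<ge> 1" by (simp add: h_def)
  \<comment> \<open>The bound k on the server indices is not needed: canonicalisation provides its own.\<close>
  then obtain A where A: "\<forall>\<sigma>. online_cost s A \<sigma> \<le> \<rho> * opt_h s h \<sigma>"
    using assms by blast
  show "\<exists>A. (\<forall>xs. A xs \<le> length xs) \<and> (\<forall>\<sigma>\<in>S. online_cost s A \<sigma> \<le> \<rho> * opt_inf s \<sigma>)"
  proof (intro exI[of _ "canonical_online A"] conjI allI ballI)
    show "canonical_online A xs \<le> length xs" for xs
      by (rule canonical_online_le)
    show "online_cost s (canonical_online A) \<sigma> \<le> \<rho> * opt_inf s \<sigma>" if "\<sigma> \<in> S" for \<sigma>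
      using spec[OF A, of \<sigma>] opt[OF that] by (simp add: online_cost_canonical_online)
  qed
qed

end
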